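(* Let $C$ be a compact convex polyhedron in $\mathbb R^n$ and $W$ a linear subspace of $\mathbb R^n$, and set $\operatorname{dep}(C,W)=\{x\in C : (x+W)\cap C^{\circ}\neq\emptyset\}$, where $C^\circ$ is the relative interior of $C$. If $D$ is a face of $C$, then $D\cap\operatorname{dep}(C,W)$ is either empty or contains the relative interior $D^\circ$ of $D$. *)

theory Defs
  imports "HOL-Analysis.Analysis"
begin

definition dep :: "'a::euclidean_space set \<Rightarrow> 'a set \<Rightarrow> 'a set" where
  "dep C W = {x \<in> C. ((\<lambda>w. x + w) ` W) \<inter> rel_interior C \<noteq> {}}"

end

theory Submission
  imports Defs
begin

text \<open>Only convexity is used: if \<open>x + w\<close> lies in the relative interior of \<open>C\<close> for some
  \<open>x \<in> D\<close>, then for \<open>y \<in> rel_interior D\<close> prolong the segment from \<open>x\<close> through \<open>y\<close> to a point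
  \<open>z \<in> D\<close>. Then \<open>y = s z + (1 - s) x\<close> with \<open>0 < s < 1\<close>, so \<open>y + (1 - s) w\<close> is a proper convex
  combination of \<open>z \<in> C\<close> and \<open>x + w \<in> rel_interior C\<close>, hence lies in \<open>rel_interior C\<close>.\<close>

lemma rel_interior_translate_through_convex_subset:
  fixes C D :: "'a::euclidean_space set"
  assumes "convex C" and "convex D" and "D \<subseteq> C"
    and "x \<in> D" and "y \<in> rel_interior D" and "x + w \<in> rel_interior C"
  obtains t where "0 < t" and "t \<le> 1" and "y + t *\<^sub>R w \<in> rel_interior C"
proof -
  obtain e where "e > 1" and zD: "(1 - e) *\<^sub>R x + e *\<^sub>R y \<in> D"
    using convex_rel_interior_iff[OF \<open>convex D\<close>] assms(4,5) by blast
  define z where "z = (1 - e) *\<^sub>R x + e *\<^sub>R y"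
  define t where "t = 1 - 1 / e"
  have "0 < t" "t \<le> 1"
    using \<open>e > 1\<close> by (auto simp: t_def)
  have "z \<in> C"
    using zD \<open>D \<subseteq> C\<close> z_def by auto
  have "z - t *\<^sub>R (z - (x + w)) \<in> rel_interior C"
    using rel_interior_convex_shrink[OF \<open>convex C\<close> assms(6) \<open>z \<in> C\<close> \<open>0 < t\<close> \<open>t \<le> 1\<close>] .
  moreover have "z - t *\<^sub>R (z - (x + w)) = y + t *\<^sub>R w"
  proof -
    have "z - t *\<^sub>R (z - (x + w)) = (1 / e) *\<^sub>R z + (1 - 1 / e) *\<^sub>R x + t *\<^sub>R w"
      by (simp add: t_def algebra_simps)
    also have "(1 / e) *\<^sub>R z = y + (1 / e - 1) *\<^sub>R x"
      using \<open>e > 1\<close> by (simp add: z_def algebra_simps diff_divide_distrib)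
    finally show ?thesis
      by (simp add: algebra_simps)
  qed
  ultimately show thesis
    using that \<open>0 < t\<close> \<open>t \<le> 1\<close> by simp
qed

lemma rel_interior_subset_dep:
  fixes C D W :: "'a::euclidean_space set"
  assumes "convex C" and "cone W" and "convex D" and "D \<subseteq> C"
    and "D \<inter> dep C W \<noteq> {}"
  shows "rel_interior D \<subseteq> dep C W"
proof
  fix y
  assume y: "y \<in> rel_interior D"
  obtain x w where "x \<in> D" and "w \<in> W" and "x + w \<in> rel_interior C"
    using assms(5) unfolding dep_def by blast
  then obtain t where "0 < t" and "y + t *\<^sub>R w \<in> rel_interior C"
    using rel_interior_translate_through_convex_subset assms(1,3,4) y by metis
  moreover have "t *\<^sub>R w \<in> W"
    using \<open>cone W\<close> \<open>w \<in> W\<close> \<open>0 < t\<close> by (simp add: cone_def)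
  moreover have "y \<in> C"
    using y rel_interior_subset \<open>D \<subseteq> C\<close> by blast
  ultimately show "y \<in> dep C W"
    unfolding dep_def by blast
qed

theorem mainTheorem5:
  fixes C D W :: "'a::euclidean_space set"
  assumes "polyhedron C" and "compact C" and "convex C"
    and "subspace W"
    and "D face_of C"
  shows "D \<inter> dep C W = {} \<or> rel_interior D \<subseteq> D \<inter> dep C W"
proof -
  have "rel_interior D \<subseteq> D \<inter> dep C W" if "D \<inter> dep C W \<noteq> {}"
    using rel_interior_subset_dep[OF \<open>convex C\<close> subspace_imp_cone[OF \<open>subspace W\<close>]
        face_of_imp_convex[OF \<open>D face_of C\<close>] face_of_imp_subset[OF \<open>D face_of C\<close>] that]
      rel_interior_subset
    by blast
  then show ?thesis
    by blast
qed

end
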